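(* Let $k\ge2$ channels and $2\le n\le k$ players, each with one packet. In every slot $t\ge1$, every pending player transmits on each channel with probability $1/k$ (so she always transmits, on a uniformly random channel), independently; a player transmitting alone on a channel succeeds and stops, while players colliding on a channel remain pending. Then the expected time until all players have transmitted successfully is at most $\frac{1}{1-\ln(e-1)}\ln\left(\frac{n}{2}\right)+\left(1-\frac1k\right)^{-1}$.
   Context: $e$ denotes Euler's number. *)

theory Defs
  imports "HOL-Probability.Probability"
begin

text \<open>Sample space: omega t i is the channel (in 0..k-1) chosen by player i in slot t+1.
  All choices are independent and uniform on the k channels.\<close>
definition chan_space :: "nat \<Rightarrow> (nat \<Rightarrow> nat \<Rightarrow> nat) measure" where
  "chan_space k = (\<Pi>\<^sub>M t\<in>UNIV. \<Pi>\<^sub>M i\<in>UNIV. measure_pmf (pmf_of_set {..<k}))"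

fun pending :: "nat \<Rightarrow> (nat \<Rightarrow> nat \<Rightarrow> nat) \<Rightarrow> nat \<Rightarrow> nat set" where
  "pending n \<omega> 0 = {..<n}"
| "pending n \<omega> (Suc t) =
     {i \<in> pending n \<omega> t. \<exists>j \<in> pending n \<omega> t. j \<noteq> i \<and> \<omega> t j = \<omega> t i}"

definition completion_time :: "nat \<Rightarrow> (nat \<Rightarrow> nat \<Rightarrow> nat) \<Rightarrow> ennreal" where
  "completion_time n \<omega> =
     (if \<exists>t. pending n \<omega> t = {} then of_nat (LEAST t. pending n \<omega> t = {}) else \<infinity>)"

end

theory Submission
  imports Defs
begin

text \<open>
  Let \<open>c = 1 - ln (e - 1)\<close>, so that \<open>exp (-c) = 1 - 1/e\<close>, and let
  \<open>G 0 = 0\<close>, \<open>G 1 = 1\<close> and \<open>G j = ln (j/2) / c + 1/(1 - 1/k)\<close> for \<open>j \<ge> 2\<close>.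
  In a slot with \<open>m \<le> k\<close> pending players, each of them collides with probability
  \<open>1 - (1 - 1/k)^(m-1) \<le> 1 - 1/e\<close>, and the number of colliders is never 1.
  Bounding \<open>G\<close> on \<open>{0} \<union> [2, m]\<close> by a line (a tangent of the concave logarithmic part,
  or a chord for small \<open>m\<close>) and using linearity of expectation, the expected potential
  after the slot is at most \<open>G m - 1\<close>. By induction on \<open>N\<close>, the expected number of busy
  slots among the first \<open>N\<close> is therefore at most \<open>G n\<close>, and monotone convergence
  yields the bound for the completion time.
\<close>

section \<open>Collision dynamics\<close>

definition colliders :: "nat set \<Rightarrow> (nat \<Rightarrow> nat) \<Rightarrow> nat set" where
  "colliders S x = {i \<in> S. \<exists>j \<in> S. j \<noteq> i \<and> x j = x i}"

fun pending_from :: "nat set \<Rightarrow> (nat \<Rightarrow> nat \<Rightarrow> nat) \<Rightarrow> nat \<Rightarrow> nat set" where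
  "pending_from S \<omega> 0 = S"
| "pending_from S \<omega> (Suc t) = colliders (pending_from S \<omega> t) (\<omega> t)"

lemma pending_eq_pending_from: "pending n \<omega> t = pending_from {..<n} \<omega> t"
  by (induction t) (auto simp: colliders_def)

lemma colliders_subset: "colliders S x \<subseteq> S"
  by (auto simp: colliders_def)

lemma card_colliders_le: "finite S \<Longrightarrow> card (colliders S x) \<le> card S"
  by (simp add: card_mono colliders_subset)

lemma card_colliders_ne_1: "card (colliders S x) \<noteq> 1"
proof
  assume "card (colliders S x) = 1"
  then obtain i where i: "colliders S x = {i}" by (auto simp: card_Suc_eq)
  then obtain j where "j \<in> S" "j \<noteq> i" "x j = x i" "i \<in> S" by (auto simp: colliders_def)
  then have "j \<in> colliders S x" by (auto simp: colliders_def)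
  with i \<open>j \<noteq> i\<close> show False by simp
qed

lemma colliders_eq_empty_if_card_le_1: "card S \<le> 1 \<Longrightarrow> finite S \<Longrightarrow> colliders S x = {}"
  by (auto simp: colliders_def le_Suc_eq card_Suc_eq)

lemma pending_from_subset: "pending_from S \<omega> t \<subseteq> S"
  by (induction t) (use colliders_subset in auto)

lemma pending_from_case_nat:
  "pending_from S (case_nat x \<omega>) (Suc t) = pending_from (colliders S x) \<omega> t"
  by (induction t) auto

lemma pending_from_empty_absorbing:
  assumes "pending_from S \<omega> t = {}" "t \<le> t'"
  shows "pending_from S \<omega> t' = {}"
  using assms(2,1) by (induction t' rule: dec_induct) (auto simp: colliders_def)

definition truncated_completion_time :: "nat \<Rightarrow> nat set \<Rightarrow> (nat \<Rightarrow> nat \<Rightarrow> nat) \<Rightarrow> ennreal" where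
  "truncated_completion_time N S \<omega> = (\<Sum>t<N. if pending_from S \<omega> t = {} then 0 else 1)"

lemma truncated_completion_time_Suc:
  "truncated_completion_time (Suc N) S \<omega> =
     truncated_completion_time N S \<omega> + (if pending_from S \<omega> N = {} then 0 else 1)"
  by (simp add: truncated_completion_time_def)

lemma truncated_completion_time_case_nat:
  "truncated_completion_time (Suc N) S (case_nat x \<omega>) =
     (if S = {} then 0 else 1) + truncated_completion_time N (colliders S x) \<omega>"
  unfolding truncated_completion_time_def
  by (subst sum.lessThan_Suc_shift) (simp add: pending_from_case_nat del: pending_from.simps(2))

lemma incseq_truncated_completion_time: "incseq (\<lambda>N. truncated_completion_time N S)"
  by (rule incseq_SucI) (simp add: le_fun_def truncated_completion_time_Suc)

lemma sum_lessThan_if_le: "(\<Sum>t<N. if t0 \<le> t then 0 else 1 :: ennreal) = of_nat (min N t0)"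
  by (induction N) (auto simp: min_def)

lemma completion_time_eq_SUP:
  "completion_time n \<omega> = (SUP N. truncated_completion_time N {..<n} \<omega>)"
proof (cases "\<exists>t. pending_from {..<n} \<omega> t = {}")
  case True
  define t0 where "t0 = (LEAST t. pending_from {..<n} \<omega> t = {})"
  have t0: "pending_from {..<n} \<omega> t0 = {}"
    unfolding t0_def by (rule LeastI_ex[OF True])
  have "pending_from {..<n} \<omega> t = {} \<longleftrightarrow> t0 \<le> t" for t
  proof
    show "t0 \<le> t" if "pending_from {..<n} \<omega> t = {}"
      unfolding t0_def using that by (rule Least_le)
    show "pending_from {..<n} \<omega> t = {}" if "t0 \<le> t"
      using t0 that by (rule pending_from_empty_absorbing)
  qed
  then have "truncated_completion_time N {..<n} \<omega> = of_nat (min N t0)" for N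
    by (simp add: truncated_completion_time_def flip: sum_lessThan_if_le)
  moreover have "(SUP N. of_nat (min N t0) :: ennreal) = of_nat t0"
    by (intro antisym SUP_least SUP_upper2[of t0]) auto
  moreover have "completion_time n \<omega> = of_nat t0"
    using True unfolding completion_time_def pending_eq_pending_from t0_def by simp
  ultimately show ?thesis by simp
next
  case False
  then have "truncated_completion_time N {..<n} \<omega> = of_nat N" for N
    by (simp add: truncated_completion_time_def)
  moreover have "completion_time n \<omega> = \<infinity>"
    using False unfolding completion_time_def pending_eq_pending_from by simp
  ultimately show ?thesis by (simp add: ennreal_SUP_of_nat_eq_top)
qed

section \<open>The probability space\<close>

definition slot_space :: "nat \<Rightarrow> (nat \<Rightarrow> nat) measure" where
  "slot_space k = (\<Pi>\<^sub>M i\<in>UNIV. measure_pmf (pmf_of_set {..<k}))"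

lemma chan_space_eq_PiM_slot_space: "chan_space k = (\<Pi>\<^sub>M t\<in>UNIV. slot_space k)"
  by (simp add: chan_space_def slot_space_def)

lemma space_slot_space [simp]: "space (slot_space k) = UNIV"
  by (simp add: slot_space_def space_PiM)

lemma space_chan_space [simp]: "space (chan_space k) = UNIV"
  by (simp add: chan_space_eq_PiM_slot_space space_PiM)

lemma prob_space_slot_space: "prob_space (slot_space k)"
  unfolding slot_space_def by (intro prob_space_PiM prob_space_measure_pmf)

lemma prob_space_chan_space: "prob_space (chan_space k)"
  unfolding chan_space_eq_PiM_slot_space by (intro prob_space_PiM prob_space_slot_space)

lemma measurable_slot_space_component:
  "(\<lambda>x. x i) \<in> slot_space k \<rightarrow>\<^sub>M count_space UNIV"
proof -
  have "(\<lambda>x. x i) \<in> slot_space k \<rightarrow>\<^sub>M measure_pmf (pmf_of_set {..<k})"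
    unfolding slot_space_def by (rule measurable_component_singleton) simp
  then show ?thesis by (simp only: measurable_cong_sets[OF refl sets_measure_pmf_count_space])
qed

lemma measurable_chan_space_slot: "(\<lambda>\<omega>. \<omega> t) \<in> chan_space k \<rightarrow>\<^sub>M slot_space k"
  unfolding chan_space_eq_PiM_slot_space by measurable

lemma pred_colliders_eq:
  fixes X :: "'a \<Rightarrow> nat \<Rightarrow> nat"
  assumes X: "\<And>i. (\<lambda>\<omega>. X \<omega> i) \<in> M \<rightarrow>\<^sub>M count_space UNIV" and "finite S"
  shows "Measurable.pred M (\<lambda>\<omega>. colliders S (X \<omega>) = B)"
proof -
  have same_channel: "Measurable.pred M (\<lambda>\<omega>. X \<omega> j = X \<omega> i)" for i j
    using measurable_compose_countable[where f="\<lambda>c \<omega>. X \<omega> j = c",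
        OF pred_count_space_const1[OF X] X] .
  have "colliders S x = B \<longleftrightarrow> B \<subseteq> S \<and> (\<forall>i\<in>S. i \<in> B \<longleftrightarrow> (\<exists>j\<in>S. j \<noteq> i \<and> x j = x i))" for x
    unfolding colliders_def by auto
  then show ?thesis
    using \<open>finite S\<close> by (simp only:) (intro pred_intros_conj1' pred_intros_finite
        pred_intros_logic(6) pred_intros_conj1' same_channel measurable_const; simp)
qed

lemma measurable_chan_space_component:
  "(\<lambda>\<omega>. \<omega> t i) \<in> chan_space k \<rightarrow>\<^sub>M count_space UNIV"
  using measurable_chan_space_slot measurable_slot_space_component by (rule measurable_compose)

lemma measurable_colliders:
  assumes "finite S"
  shows "colliders S \<in> slot_space k \<rightarrow>\<^sub>M count_space (Pow S)"
proof -
  have "{x \<in> space (slot_space k). colliders S x = B} \<in> sets (slot_space k)" for B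
    using pred_colliders_eq[where X="\<lambda>x. x", OF measurable_slot_space_component assms]
    by (rule predE)
  then show ?thesis
    using assms colliders_subset by (auto simp: measurable_count_space_eq2 vimage_def)
qed

lemma measurable_card_colliders:
  "finite S \<Longrightarrow> (\<lambda>x. card (colliders S x)) \<in> slot_space k \<rightarrow>\<^sub>M count_space UNIV"
  using measurable_colliders measurable_count_space by (rule measurable_compose)

lemma sets_collides:
  assumes "finite S"
  shows "{x. i \<in> colliders S x} \<in> sets (slot_space k)"
proof -
  have "colliders S -` {B \<in> Pow S. i \<in> B} \<inter> space (slot_space k) \<in> sets (slot_space k)"
    by (rule measurable_sets[OF measurable_colliders[OF assms]]) auto
  then show ?thesis
    using colliders_subset by (simp add: vimage_def)
qed

lemma sets_pending_from_eq:
  assumes "finite S"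
  shows "{\<omega> \<in> space (chan_space k). pending_from S \<omega> t = A} \<in> sets (chan_space k)"
proof (induction t arbitrary: A)
  case (Suc t)
  have colliders_eq: "{\<omega> \<in> space (chan_space k). colliders B (\<omega> t) = A} \<in> sets (chan_space k)"
    if "B \<in> Pow S" for B
    using pred_colliders_eq[where X="\<lambda>\<omega>. \<omega> t", OF measurable_chan_space_component]
      finite_subset[OF _ assms] that by (intro predE) auto
  have "{\<omega> \<in> space (chan_space k). pending_from S \<omega> (Suc t) = A} =
      (\<Union>B\<in>Pow S. {\<omega> \<in> space (chan_space k). pending_from S \<omega> t = B} \<inter>
                  {\<omega> \<in> space (chan_space k). colliders B (\<omega> t) = A})"
    using pending_from_subset by auto
  also have "\<dots> \<in> sets (chan_space k)"
    using assms Suc colliders_eq by (intro sets.finite_UN sets.Int) auto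
  finally show ?case .
qed (simp del: space_chan_space)

lemma borel_measurable_truncated_completion_time:
  "finite S \<Longrightarrow> truncated_completion_time N S \<in> borel_measurable (chan_space k)"
  unfolding truncated_completion_time_def
  by (intro borel_measurable_sum measurable_If sets_pending_from_eq measurable_const) auto

lemma nn_integral_PiM_case_nat:
  assumes M: "prob_space M" and h: "h \<in> borel_measurable (\<Pi>\<^sub>M t\<in>UNIV. M)"
  shows "(\<integral>\<^sup>+ \<omega>. h \<omega> \<partial>(\<Pi>\<^sub>M t\<in>UNIV. M)) =
    (\<integral>\<^sup>+ x. (\<integral>\<^sup>+ \<omega>. h (case_nat x \<omega>) \<partial>(\<Pi>\<^sub>M t\<in>UNIV. M)) \<partial>M)"
proof -
  interpret sequence_space M
    unfolding sequence_space_def using M by (rule product_prob_spaceI)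
  have case_nat: "(\<lambda>(x, \<omega>). case_nat x \<omega>) \<in> M \<Otimes>\<^sub>M S \<rightarrow>\<^sub>M S"
    unfolding split_beta' by (rule measurable_case_nat') auto
  have "(\<integral>\<^sup>+ \<omega>. h \<omega> \<partial>S) = (\<integral>\<^sup>+ \<omega>. h \<omega> \<partial>distr (M \<Otimes>\<^sub>M S) S (\<lambda>(x, \<omega>). case_nat x \<omega>))"
    by (simp only: PiM_iter)
  also have "\<dots> = (\<integral>\<^sup>+ y. h (case_nat (fst y) (snd y)) \<partial>(M \<Otimes>\<^sub>M S))"
    using case_nat h by (subst nn_integral_distr) (simp_all add: split_beta')
  also have "\<dots> = (\<integral>\<^sup>+ x. (\<integral>\<^sup>+ \<omega>. h (case_nat x \<omega>) \<partial>S) \<partial>M)"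
    using measurable_comp[OF case_nat h]
    by (subst P.nn_integral_fst[symmetric]) (simp_all add: split_beta' comp_def)
  finally show ?thesis .
qed

lemma nn_integral_chan_space_case_nat:
  assumes "h \<in> borel_measurable (chan_space k)"
  shows "(\<integral>\<^sup>+ \<omega>. h \<omega> \<partial>chan_space k) =
    (\<integral>\<^sup>+ x. (\<integral>\<^sup>+ \<omega>. h (case_nat x \<omega>) \<partial>chan_space k) \<partial>slot_space k)"
  using assms unfolding chan_space_eq_PiM_slot_space
  by (rule nn_integral_PiM_case_nat[OF prob_space_slot_space])

section \<open>A single slot\<close>

lemma measure_alone_on_channel:
  assumes "finite S" "i \<in> S" "c < k"
  shows "measure (slot_space k) {x. x i = c \<and> (\<forall>j\<in>S - {i}. x j \<noteq> c)} =
    1 / real k * (1 - 1 / real k) ^ (card S - 1)"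
proof -
  let ?U = "measure_pmf (pmf_of_set {..<k})"
  interpret product_prob_space "\<lambda>_. ?U" "UNIV :: nat set"
    by (rule product_prob_spaceI) (rule prob_space_measure_pmf)
  define F where "F j = (if j = i then {c} else - {c})" for j
  have "{..<k} \<noteq> {}"
    using assms(3) by auto
  moreover have "card ({..<k} \<inter> - {c}) = k - 1"
    using assms(3) by (simp add: Diff_eq[symmetric])
  ultimately have U: "measure ?U (F j) = (if j = i then 1 / real k else 1 - 1 / real k)" for j
    using measure_pmf_of_set[of "{..<k}"] assms(3) by (auto simp: F_def of_nat_diff field_simps)
  have "{x. x i = c \<and> (\<forall>j\<in>S - {i}. x j \<noteq> c)} = prod_emb UNIV (\<lambda>_. ?U) S (Pi\<^sub>E S F)"
    using assms(2) by (force simp: prod_emb_def PiE_iff F_def space_PiM)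
  then have "measure (slot_space k) {x. x i = c \<and> (\<forall>j\<in>S - {i}. x j \<noteq> c)} = (\<Prod>j\<in>S. measure ?U (F j))"
    unfolding slot_space_def using assms(1) by (simp add: measure_PiM_emb)
  also have "\<dots> = measure ?U (F i) * (\<Prod>j\<in>S - {i}. measure ?U (F j))"
    using assms by (simp add: prod.remove)
  also have "\<dots> = 1 / real k * (1 - 1 / real k) ^ (card S - 1)"
    using assms by (simp add: U)
  finally show ?thesis .
qed

lemma prob_collides_le:
  assumes "finite S" "i \<in> S" "1 \<le> k"
  shows "measure (slot_space k) {x. i \<in> colliders S x} \<le> 1 - (1 - 1 / real k) ^ (card S - 1)"
proof -
  define A where "A c = {x. x i = (c::nat) \<and> (\<forall>j\<in>S - {i}. x j \<noteq> c)}" for c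
  have "Measurable.pred (slot_space k) (\<lambda>x. x i = c \<and> (\<forall>j\<in>S - {i}. x j \<noteq> c))" for c
    using assms(1) by (intro pred_intros_logic(3) pred_intros_finite pred_intros_logic(2)
        pred_count_space_const1 measurable_slot_space_component) auto
  then have A_sets: "A c \<in> sets (slot_space k)" for c
    unfolding A_def by (simp add: pred_def)
  interpret prob_space "slot_space k" by (rule prob_space_slot_space)
  have "(1 - 1 / real k) ^ (card S - 1) = (\<Sum>c<k. measure (slot_space k) (A c))"
    using assms by (simp add: A_def measure_alone_on_channel)
  also have "\<dots> = measure (slot_space k) (\<Union>c<k. A c)"
    using A_sets
    by (intro finite_measure_finite_Union[symmetric]) (auto simp: disjoint_family_on_def A_def)
  also have "\<dots> \<le> measure (slot_space k) (space (slot_space k) - {x. i \<in> colliders S x})"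
  proof (rule finite_measure_mono)
    show "space (slot_space k) - {x. i \<in> colliders S x} \<in> events"
      using sets_collides[OF assms(1)] by blast
  qed (auto simp: A_def colliders_def)
  also have "\<dots> = 1 - measure (slot_space k) {x. i \<in> colliders S x}"
    using prob_compl[OF sets_collides[OF assms(1)]] by simp
  finally show ?thesis by simp
qed

lemma card_colliders_eq_sum_indicator:
  assumes "finite S"
  shows "real (card (colliders S x)) = (\<Sum>i\<in>S. indicator {x. i \<in> colliders S x} x)"
proof -
  have "(\<Sum>i\<in>S. indicator {x. i \<in> colliders S x} x :: real) =
      (\<Sum>i\<in>S. real (indicator (colliders S x) i))"
    by (intro sum.cong) (auto simp: indicator_def)
  also have "\<dots> = real (card (S \<inter> colliders S x))"
    using sum_indicator_eq_card[OF assms, of "colliders S x"] by (metis of_nat_sum)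
  also have "S \<inter> colliders S x = colliders S x"
    using colliders_subset by blast
  finally show ?thesis by simp
qed

lemma nn_integral_affine_card_colliders_le:
  assumes S: "finite S" and "1 \<le> k" "0 \<le> \<alpha>" "0 \<le> \<beta>"
  shows "(\<integral>\<^sup>+ x. ennreal (\<alpha> + \<beta> * real (card (colliders S x))) \<partial>slot_space k)
    \<le> ennreal (\<alpha> + \<beta> * (real (card S) * (1 - (1 - 1 / real k) ^ (card S - 1))))"
proof -
  interpret prob_space "slot_space k" by (rule prob_space_slot_space)
  define f where "f x = \<alpha> + \<beta> * (\<Sum>i\<in>S. indicator {x. i \<in> colliders S x} x)" for x
  have collides_integrable:
      "integrable (slot_space k) (indicator {x. i \<in> colliders S x} :: _ \<Rightarrow> real)" for i
    using sets_collides[OF S] by (intro integrable_real_indicator) (auto simp: emeasure_eq_measure)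
  then have f_integrable: "integrable (slot_space k) f"
    unfolding f_def
    by (intro Bochner_Integration.integrable_add Bochner_Integration.integrable_mult_right
        Bochner_Integration.integrable_sum integrable_const) auto
  have "(\<integral>\<^sup>+ x. ennreal (\<alpha> + \<beta> * real (card (colliders S x))) \<partial>slot_space k) =
      (\<integral>\<^sup>+ x. ennreal (f x) \<partial>slot_space k)"
    by (simp add: f_def card_colliders_eq_sum_indicator[OF S])
  also have "\<dots> = ennreal (\<integral>x. f x \<partial>slot_space k)"
  proof (rule nn_integral_eq_integral[OF f_integrable])
    show "AE x in slot_space k. 0 \<le> f x"
      using assms
      by (auto simp: f_def intro!: AE_I2 add_nonneg_nonneg mult_nonneg_nonneg sum_nonneg)
  qed
  also have "(\<integral>x. f x \<partial>slot_space k) = \<alpha> + \<beta> * (\<Sum>i\<in>S. prob {x. i \<in> colliders S x})"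
    unfolding f_def using S collides_integrable prob_space[simplified]
    by (subst Bochner_Integration.integral_add) (auto simp: Bochner_Integration.integral_sum)
  also have "\<dots> \<le> \<alpha> + \<beta> * (real (card S) * (1 - (1 - 1 / real k) ^ (card S - 1)))"
  proof -
    have "(\<Sum>i\<in>S. prob {x. i \<in> colliders S x}) \<le> (\<Sum>i\<in>S. 1 - (1 - 1 / real k) ^ (card S - 1))"
      using prob_collides_le[OF S _ \<open>1 \<le> k\<close>] by (intro sum_mono) auto
    then show ?thesis
      using assms by (simp add: mult_left_mono)
  qed
  finally show ?thesis
    by (simp add: ennreal_leI)
qed

section \<open>Numerical constants\<close>

lemma exp_le_taylor:
  fixes x :: real
  assumes "0 \<le> x" "x \<le> 1"
  shows "exp x \<le> (\<Sum>i\<le>6. x ^ i / fact i) + 3 * x ^ 7 / 720"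
proof -
  have "\<bar>exp x - (\<Sum>i\<le>6. x ^ i / fact i)\<bar> \<le> exp \<bar>x\<bar> * (\<bar>x\<bar> ^ Suc 6) / fact 6"
    using Taylor_exp_field[of x 6] by simp
  also have "\<dots> = exp x * x ^ 7 / 720"
    using assms by (simp add: fact_numeral)
  also have "\<dots> \<le> 3 * x ^ 7 / 720"
    using assms exp_le order_trans[OF exp_mono[OF assms(2)]]
    by (intro divide_right_mono mult_right_mono) auto
  finally show ?thesis by linarith
qed

lemma taylor_le_exp:
  fixes x :: real
  assumes "0 \<le> x"
  shows "(\<Sum>i<7. x ^ i / fact i) \<le> exp x"
proof -
  obtain t where "exp x = (\<Sum>i<7. x ^ i / fact i) + exp t / fact 7 * x ^ 7"
    using Maclaurin_exp_le[of x 7] by blast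
  moreover have "0 \<le> exp t / fact 7 * x ^ 7"
    using assms by simp
  ultimately show ?thesis by linarith
qed

lemma ln_ge_by_taylor:
  fixes x b :: real
  assumes "0 \<le> x" "x \<le> 1" "(\<Sum>i\<le>6. x ^ i / fact i) + 3 * x ^ 7 / 720 \<le> b"
  shows "x \<le> ln b"
proof -
  have "exp x \<le> b"
    using exp_le_taylor[OF assms(1,2)] assms(3) by linarith
  moreover have "0 < b"
    using exp_gt_zero[of x] \<open>exp x \<le> b\<close> by linarith
  ultimately show ?thesis
    by (simp add: ln_ge_iff)
qed

lemma ln_le_by_taylor:
  fixes x b :: real
  assumes "0 \<le> x" "0 < b" "b \<le> (\<Sum>i<7. x ^ i / fact i)"
  shows "ln b \<le> x"
proof -
  have "ln b \<le> ln (exp x)"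
    using taylor_le_exp[OF assms(1)] assms(2,3) by (subst ln_le_cancel_iff) auto
  then show ?thesis by simp
qed

lemma ln_lower_bounds:
  "35/100 \<le> ln (3/2 :: real)" "69/100 \<le> ln (2 :: real)" "9/10 \<le> ln (5/2 :: real)"
  by (rule ln_ge_by_taylor; simp add: fact_numeral atMost_nat_numeral power_divide)+

text \<open>\<open>exp (- shrink_rate) = 1 - exp (-1)\<close> bounds the expected fraction of the pending
  players that collide.\<close>
definition shrink_rate :: real where
  "shrink_rate = 1 - ln (exp 1 - 1)"

lemma exp_minus_shrink_rate: "exp (- shrink_rate) = 1 - exp (-1)"
proof -
  have "exp 1 - 1 > (0::real)"
    by simp
  then have "exp (- shrink_rate) = (exp 1 - 1) * exp (-1)"
    by (simp add: shrink_rate_def exp_diff exp_minus field_simps)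
  then show ?thesis
    by (simp add: algebra_simps exp_minus)
qed

lemma shrink_rate_bounds: "45/100 \<le> shrink_rate" "shrink_rate \<le> 465/1000"
proof -
  have e: "171828 / 100000 \<le> exp (1::real) - 1" "exp (1::real) - 1 \<le> 171829 / 100000"
    using e_approx_32 by (simp_all add: abs_if split: if_splits)
  have "535/1000 \<le> ln (1718/1000 :: real)"
    by (rule ln_ge_by_taylor) (simp_all add: fact_numeral atMost_nat_numeral power_divide)
  also have "\<dots> \<le> ln (exp 1 - 1)"
    using e by simp
  finally show "shrink_rate \<le> 465/1000"
    by (simp add: shrink_rate_def)
  have "ln (exp 1 - 1) \<le> ln (171829 / 100000 :: real)"
    using e by simp
  also have "\<dots> \<le> 55/100"
    by (rule ln_le_by_taylor) (simp_all add: fact_numeral lessThan_nat_numeral power_divide)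
  finally show "45/100 \<le> shrink_rate"
    by (simp add: shrink_rate_def)
qed

lemma shrink_rate_pos: "0 < shrink_rate"
  using shrink_rate_bounds by linarith

lemma exp_minus_one_le_power:
  assumes "1 \<le> m" "m \<le> k"
  shows "exp (-1) \<le> (1 - 1 / real k) ^ (m - 1)"
proof (cases "k = 1")
  case False
  define n where "n = k - 1"
  have n: "0 < n" "0 < real n" "real k = real n + 1"
    using assms False by (auto simp: n_def)
  have bound: "(1 + 1 / real n) ^ n \<le> exp 1"
    using exp_ge_one_plus_x_over_n_power_n[of n 1] n by simp
  have "1 - 1 / real k = real n / (real n + 1)" "1 + 1 / real n = (real n + 1) / real n"
    using n by (simp_all add: field_simps)
  then have "(1 + 1 / real n) ^ n * (1 - 1 / real k) ^ n = 1"
    using n by (simp flip: power_mult_distrib)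
  then have "inverse ((1 + 1 / real n) ^ n) = (1 - 1 / real k) ^ n"
    by (rule inverse_unique)
  moreover have "exp (-1) \<le> inverse ((1 + 1 / real n) ^ n)"
    unfolding exp_minus by (rule le_imp_inverse_le[OF bound]) (simp add: add_pos_nonneg)
  ultimately have "exp (-1) \<le> (1 - 1 / real k) ^ n"
    by simp
  also have "\<dots> \<le> (1 - 1 / real k) ^ (m - 1)"
    using assms by (intro power_decreasing) (auto simp: n_def)
  finally show ?thesis .
qed (use assms in simp)

section \<open>The potential and its drift\<close>

text \<open>For \<open>j \<ge> 2\<close> this is the bound of the theorem for \<open>j\<close> players; zero players need no
  slot and a single player needs exactly one.\<close>
definition potential :: "nat \<Rightarrow> nat \<Rightarrow> real" where
  "potential k j = (if j = 0 then 0 else if j = 1 then 1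
     else ln (real j / 2) / shrink_rate + inverse (1 - 1 / real k))"

lemma inverse_one_minus_inverse:
  "2 \<le> k \<Longrightarrow> inverse (1 - 1 / real k) = 1 + 1 / (real k - 1)"
  by (simp add: field_simps)

lemma potential_ge_1: "2 \<le> k \<Longrightarrow> 1 \<le> j \<Longrightarrow> 1 \<le> potential k j"
  using shrink_rate_pos by (auto simp: potential_def inverse_one_minus_inverse)

text \<open>A line dominating the potential at every possible number of colliders whose value
  at the bound for their expected number is at most \<open>potential k m - 1\<close>: by linearity of
  expectation it certifies an expected drop of the potential by 1.\<close>
definition drift_line :: "nat \<Rightarrow> nat \<Rightarrow> real \<Rightarrow> real \<Rightarrow> bool" where
  "drift_line k m \<alpha> \<beta> \<longleftrightarrow> 0 \<le> \<alpha> \<and> 0 \<le> \<beta> \<and>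
     (\<forall>j. j = 0 \<or> 2 \<le> j \<and> j \<le> m \<longrightarrow> potential k j \<le> \<alpha> + \<beta> * real j) \<and>
     \<alpha> + \<beta> * (real m * (1 - (1 - 1 / real k) ^ (m - 1))) \<le> potential k m - 1"

lemma drift_line_2:
  assumes "2 \<le> k"
  shows "drift_line k 2 0 (inverse (1 - 1 / real k) / 2)"
proof -
  have "j = 0 \<or> 2 \<le> j \<and> j \<le> 2 \<longleftrightarrow> j = 0 \<or> j = 2" for j :: nat
    by auto
  moreover have "inverse (1 - 1 / real k) / 2 * (2 * (1 - (1 - 1 / real k))) =
      inverse (1 - 1 / real k) - 1"
    using assms by (simp add: inverse_one_minus_inverse field_simps)
  ultimately show ?thesis
    using assms by (simp add: drift_line_def potential_def inverse_one_minus_inverse)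
qed

lemma drift_line_3:
  assumes "3 \<le> k"
  shows "drift_line k 3 0 (potential k 3 / 3)"
proof -
  define a where "a = inverse (1 - 1 / real k)"
  define r where "r = 1 - 1 / real k"
  define L where "L = ln (3 / 2 :: real)"
  have a: "1 \<le> a" "a \<le> 3/2" "a * r = 1"
    using assms by (simp_all add: a_def r_def inverse_one_minus_inverse field_simps)
  have r: "2/3 \<le> r"
    using assms by (simp add: r_def field_simps)
  have potential_3: "potential k 3 = L / shrink_rate + a"
    by (simp add: potential_def L_def a_def)
  have "3/4 \<le> L / shrink_rate"
    using ln_lower_bounds(1) shrink_rate_bounds shrink_rate_pos by (simp add: L_def field_simps)
  moreover have "potential k 2 = a"
    by (simp add: potential_def a_def)
  ultimately have slope: "potential k 2 \<le> potential k 3 / 3 * 2"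
    using a potential_3 by linarith
  have "3/4 * r\<^sup>2 \<le> L / shrink_rate * r\<^sup>2"
    using \<open>3/4 \<le> L / shrink_rate\<close> by (intro mult_right_mono) auto
  moreover have "0 \<le> (3 * r - 2) * (r + 2)"
    using r by (intro mult_nonneg_nonneg) auto
  then have "0 \<le> 3 * r\<^sup>2 + 4 * r - 4"
    by (simp add: algebra_simps power2_eq_square)
  ultimately have "1 \<le> L / shrink_rate * r\<^sup>2 + r"
    by linarith
  moreover have "a * r\<^sup>2 = r"
    using a(3) by (simp add: power2_eq_square mult.assoc[symmetric])
  ultimately have "1 \<le> potential k 3 * r\<^sup>2"
    by (simp add: potential_3 distrib_right)
  then have "potential k 3 / 3 * (3 * (1 - r\<^sup>2)) \<le> potential k 3 - 1"
    by (simp add: algebra_simps)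
  moreover have "j = 0 \<or> 2 \<le> j \<and> j \<le> 3 \<longleftrightarrow> j = 0 \<or> j = 2 \<or> j = 3" for j :: nat
    by auto
  moreover have "0 \<le> potential k 3"
    using a potential_3 \<open>3/4 \<le> L / shrink_rate\<close> by linarith
  ultimately show ?thesis
    using slope by (auto simp: drift_line_def r_def numeral_eq_Suc potential_def)
qed

text \<open>The slope is that of the tangent through the origin to
  \<open>j \<mapsto> ln (j/2) / shrink_rate + inverse (1 - 1/k)\<close>.\<close>
lemma potential_le_origin_tangent:
  assumes "2 \<le> j"
  shows "potential k j \<le>
    exp (inverse (1 - 1 / real k) * shrink_rate - 1) / (2 * shrink_rate) * real j"
proof -
  define a where "a = inverse (1 - 1 / real k)"
  define y where "y = real j / 2 * exp (a * shrink_rate - 1)"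
  have "0 < y"
    using assms by (simp add: y_def)
  have "ln y = ln (real j / 2) + ln (exp (a * shrink_rate - 1))"
    unfolding y_def using assms by (intro ln_mult_pos) auto
  then have "ln y = ln (real j / 2) + (a * shrink_rate - 1)"
    by (simp only: ln_exp)
  then have "ln (real j / 2) + a * shrink_rate \<le> y"
    using ln_le_minus_one[OF \<open>0 < y\<close>] by linarith
  have "potential k j = (ln (real j / 2) + a * shrink_rate) / shrink_rate"
    using assms shrink_rate_pos by (simp add: potential_def a_def add_divide_distrib)
  also have "\<dots> \<le> y / shrink_rate"
    using \<open>ln (real j / 2) + a * shrink_rate \<le> y\<close> shrink_rate_pos by (intro divide_right_mono) auto
  also have "\<dots> = exp (a * shrink_rate - 1) / (2 * shrink_rate) * real j"
    by (simp add: y_def)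
  finally show ?thesis
    by (simp add: a_def)
qed

text \<open>\<open>171828 / 100000\<close> is a lower bound for \<open>e - 1\<close>.\<close>
lemma origin_tangent_interval_bound:
  fixes u E L :: real
  assumes "u_lo \<le> u" "u \<le> u_hi" "0 \<le> u_lo" "u_hi < 1" "0 \<le> E" "E \<le> E_hi"
    and "E_hi / (2 * (171828 / 100000) * (1 - u_hi)) \<le> L_lo + u_lo" "L_lo \<le> L"
  shows "exp u / (exp 1 - 1) * E / 2 \<le> L + u"
proof -
  have e: "171828 / 100000 \<le> exp (1::real) - 1"
    using e_approx_32 by (simp add: abs_if split: if_splits)
  have "1 - u_hi \<le> exp (- u)"
    using exp_ge_add_one_self[of "- u"] assms(2) by linarith
  then have "exp u \<le> 1 / (1 - u_hi)"
    using assms(4) by (simp add: exp_minus field_simps)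
  then have "exp u / (exp 1 - 1) * E / 2 \<le> 1 / (1 - u_hi) / (171828 / 100000) * E_hi / 2"
    using assms e by (intro divide_right_mono mult_mono frac_le) auto
  also have "\<dots> = E_hi / (2 * (171828 / 100000) * (1 - u_hi))"
    using assms(4) by (simp add: field_simps)
  finally show ?thesis
    using assms by linarith
qed

lemma drift_inequality_4:
  assumes "4 \<le> k"
  shows "exp (shrink_rate / (real k - 1)) / (exp 1 - 1) * (4 * (1 - (1 - 1 / real k) ^ 3)) / 2
    \<le> ln 2 + shrink_rate / (real k - 1)"
proof (cases "k = 4")
  case True
  show ?thesis
    by (rule origin_tangent_interval_bound[where u_lo="15/100" and u_hi="155/1000"
          and E_hi="37/16" and L_lo="69/100"])
      (use True shrink_rate_bounds ln_lower_bounds in \<open>simp_all add: power_divide\<close>)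
next
  case False
  have "(4/5) ^ 3 \<le> (1 - 1 / real k) ^ 3"
    using False assms by (intro power_mono) (auto simp: field_simps)
  then have "4 * (1 - (1 - 1 / real k) ^ 3) \<le> 244/125"
    by (simp add: power_divide)
  moreover have "0 \<le> 4 * (1 - (1 - 1 / real k) ^ 3)"
    using assms by (simp add: power_le_one)
  moreover have "shrink_rate / (real k - 1) \<le> shrink_rate / 4"
    using False assms shrink_rate_pos by (intro divide_left_mono) auto
  then have "shrink_rate / (real k - 1) \<le> 11625/100000"
    using shrink_rate_bounds by linarith
  moreover have "0 \<le> shrink_rate / (real k - 1)"
    using assms shrink_rate_pos by simp
  ultimately show ?thesis
    using shrink_rate_bounds shrink_rate_pos assms ln_lower_bounds
    by (intro origin_tangent_interval_bound[where u_lo=0 and u_hi="11625/100000"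
          and E_hi="244/125" and L_lo="69/100"]) auto
qed

lemma drift_inequality_5:
  assumes "5 \<le> k"
  shows "exp (shrink_rate / (real k - 1)) / (exp 1 - 1) * (5 * (1 - (1 - 1 / real k) ^ 4)) / 2
    \<le> ln (5 / 2) + shrink_rate / (real k - 1)"
proof (cases "k = 5")
  case True
  show ?thesis
    by (rule origin_tangent_interval_bound[where u_lo="1125/10000" and u_hi="11625/100000"
          and E_hi="369/125" and L_lo="9/10"])
      (use True shrink_rate_bounds ln_lower_bounds in \<open>simp_all add: power_divide\<close>)
next
  case False
  have "(5/6) ^ 4 \<le> (1 - 1 / real k) ^ 4"
    using False assms by (intro power_mono) (auto simp: field_simps)
  then have "5 * (1 - (1 - 1 / real k) ^ 4) \<le> 3355/1296"
    by (simp add: power_divide)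
  moreover have "0 \<le> 5 * (1 - (1 - 1 / real k) ^ 4)"
    using assms by (simp add: power_le_one)
  moreover have "shrink_rate / (real k - 1) \<le> shrink_rate / 5"
    using False assms shrink_rate_pos by (intro divide_left_mono) auto
  then have "shrink_rate / (real k - 1) \<le> 93/1000"
    using shrink_rate_bounds by linarith
  moreover have "0 \<le> shrink_rate / (real k - 1)"
    using assms shrink_rate_pos by simp
  ultimately show ?thesis
    using shrink_rate_bounds shrink_rate_pos assms ln_lower_bounds
    by (intro origin_tangent_interval_bound[where u_lo=0 and u_hi="93/1000"
          and E_hi="3355/1296" and L_lo="9/10"]) auto
qed

lemma drift_line_4_5:
  assumes "m = 4 \<or> m = 5" "m \<le> k"
  shows "drift_line k m 0 (exp (inverse (1 - 1 / real k) * shrink_rate - 1) / (2 * shrink_rate))"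
proof -
  define a where "a = inverse (1 - 1 / real k)"
  define \<mu> where "\<mu> = real m * (1 - (1 - 1 / real k) ^ (m - 1))"
  have "2 \<le> k"
    using assms by linarith
  then have a: "a - 1 = 1 / (real k - 1)"
    by (simp add: a_def inverse_one_minus_inverse)
  have "a * shrink_rate - 1 = (a - 1) * shrink_rate + (shrink_rate - 1)"
    by (simp add: algebra_simps)
  also have "\<dots> = shrink_rate / (real k - 1) - ln (exp 1 - 1)"
    by (simp add: a shrink_rate_def)
  finally have "a * shrink_rate - 1 = shrink_rate / (real k - 1) - ln (exp 1 - 1)" .
  then have "exp (a * shrink_rate - 1) = exp (shrink_rate / (real k - 1)) / (exp 1 - 1)"
    by (simp add: exp_diff)
  then have "exp (a * shrink_rate - 1) / (2 * shrink_rate) * \<mu> =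
      (exp (shrink_rate / (real k - 1)) / (exp 1 - 1) * \<mu> / 2) / shrink_rate"
    by simp
  also have "\<dots> \<le> (ln (real m / 2) + shrink_rate / (real k - 1)) / shrink_rate"
    using assms drift_inequality_4 drift_inequality_5 shrink_rate_pos
    by (intro divide_right_mono) (auto simp: \<mu>_def)
  also have "\<dots> = potential k m - 1"
    using assms a shrink_rate_pos by (auto simp: potential_def a_def field_simps)
  finally show ?thesis
    using shrink_rate_pos potential_le_origin_tangent
    by (auto simp: drift_line_def \<mu>_def a_def potential_def)
qed

text \<open>The tangent of the logarithmic part at \<open>\<mu>\<close>; its intercept is nonnegative once
  \<open>ln (m/2) > 1\<close>, which is why smaller \<open>m\<close> are treated separately.\<close>
lemma drift_line_ge_6:
  assumes "6 \<le> m" "m \<le> k"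
  defines "\<mu> \<equiv> real m * exp (- shrink_rate)"
  shows "drift_line k m
    (inverse (1 - 1 / real k) + (ln (real m / 2) - shrink_rate - 1) / shrink_rate)
    (1 / (\<mu> * shrink_rate))"
proof -
  define \<alpha> where "\<alpha> = inverse (1 - 1 / real k) + (ln (real m / 2) - shrink_rate - 1) / shrink_rate"
  note c = shrink_rate_pos
  have \<mu>: "0 < \<mu>"
    using assms by (simp add: \<mu>_def)
  have "ln 3 \<le> ln (real m / 2)"
    using assms(1) by (intro ln_mono) auto
  then have "1 < ln (real m / 2)"
    using ln3_gt_1 by linarith
  moreover have "1 \<le> inverse (1 - 1 / real k)"
    using assms by (simp add: inverse_one_minus_inverse)
  moreover have "\<alpha> = (inverse (1 - 1 / real k) - 1) + (ln (real m / 2) - 1) / shrink_rate"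
    using c by (simp add: \<alpha>_def diff_divide_distrib)
  ultimately have "0 \<le> \<alpha>"
    using c by (simp add: add_nonneg_nonneg)
  have tangent: "potential k j \<le> \<alpha> + 1 / (\<mu> * shrink_rate) * real j" if "2 \<le> j" for j
  proof -
    have "ln (real j / \<mu>) = ln (real j / 2) - ln (real m / 2) + shrink_rate"
      using that assms \<mu> by (simp add: \<mu>_def ln_div ln_mult)
    then have "ln (real j / 2) \<le> ln (real m / 2) - shrink_rate - 1 + real j / \<mu>"
      using ln_le_minus_one[of "real j / \<mu>"] that \<mu> by simp
    then have "ln (real j / 2) / shrink_rate \<le>
        (ln (real m / 2) - shrink_rate - 1 + real j / \<mu>) / shrink_rate"
      using c by (intro divide_right_mono) auto
    then show ?thesis
      using that c \<mu> by (simp add: potential_def \<alpha>_def add_divide_distrib diff_divide_distrib)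
  qed
  have "exp (-1) \<le> (1 - 1 / real k) ^ (m - 1)"
    using exp_minus_one_le_power assms by simp
  then have "real m * (1 - (1 - 1 / real k) ^ (m - 1)) \<le> \<mu>"
    unfolding \<mu>_def exp_minus_shrink_rate by (intro mult_left_mono) auto
  then have "1 / (\<mu> * shrink_rate) * (real m * (1 - (1 - 1 / real k) ^ (m - 1))) \<le>
      1 / (\<mu> * shrink_rate) * \<mu>"
    using \<mu> c by (intro mult_left_mono) auto
  also have "\<dots> = 1 / shrink_rate"
    using \<mu> by simp
  finally have "1 / (\<mu> * shrink_rate) * (real m * (1 - (1 - 1 / real k) ^ (m - 1))) \<le>
      1 / shrink_rate" .
  moreover have "\<alpha> + 1 / shrink_rate = potential k m - 1"
    using assms c by (simp add: potential_def \<alpha>_def field_simps)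
  ultimately show ?thesis
    using \<open>0 \<le> \<alpha>\<close> tangent \<mu> c unfolding drift_line_def \<alpha>_def[symmetric]
    by (auto simp: potential_def)
qed

lemma drift_line_exists:
  assumes "2 \<le> m" "m \<le> k"
  shows "\<exists>\<alpha> \<beta>. drift_line k m \<alpha> \<beta>"
proof -
  consider "m = 2" | "m = 3" | "m = 4 \<or> m = 5" | "6 \<le> m"
    using assms(1) by linarith
  then show ?thesis
    using assms drift_line_2 drift_line_3 drift_line_4_5 drift_line_ge_6 by cases blast+
qed

lemma nn_integral_potential_colliders_le:
  assumes S: "finite S" and "2 \<le> card S" "card S \<le> k"
  shows "(\<integral>\<^sup>+ x. ennreal (potential k (card (colliders S x))) \<partial>slot_space k)
    \<le> ennreal (potential k (card S) - 1)"
proof -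
  obtain \<alpha> \<beta> where "0 \<le> \<alpha>" "0 \<le> \<beta>"
    and dominates: "\<And>j. j = 0 \<or> 2 \<le> j \<and> j \<le> card S \<Longrightarrow> potential k j \<le> \<alpha> + \<beta> * real j"
    and drift: "\<alpha> + \<beta> * (real (card S) * (1 - (1 - 1 / real k) ^ (card S - 1)))
      \<le> potential k (card S) - 1"
    using drift_line_exists[OF assms(2,3)] unfolding drift_line_def by blast
  have "potential k (card (colliders S x)) \<le> \<alpha> + \<beta> * real (card (colliders S x))" for x
    using card_colliders_ne_1[of S x] card_colliders_le[OF S, of x] by (intro dominates) linarith
  then have "(\<integral>\<^sup>+ x. ennreal (potential k (card (colliders S x))) \<partial>slot_space k)
      \<le> (\<integral>\<^sup>+ x. ennreal (\<alpha> + \<beta> * real (card (colliders S x))) \<partial>slot_space k)"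
    by (intro nn_integral_mono ennreal_leI)
  also have "\<dots> \<le> ennreal (\<alpha> + \<beta> * (real (card S) * (1 - (1 - 1 / real k) ^ (card S - 1))))"
    using assms \<open>0 \<le> \<alpha>\<close> \<open>0 \<le> \<beta>\<close> by (intro nn_integral_affine_card_colliders_le) auto
  also have "\<dots> \<le> ennreal (potential k (card S) - 1)"
    using drift by (rule ennreal_leI)
  finally show ?thesis .
qed

lemma one_slot_potential_bound:
  assumes "2 \<le> k" "finite S" "card S \<le> k"
  shows "(if S = {} then 0 else 1) +
      (\<integral>\<^sup>+ x. ennreal (potential k (card (colliders S x))) \<partial>slot_space k)
    \<le> ennreal (potential k (card S))"
proof -
  interpret prob_space "slot_space k" by (rule prob_space_slot_space)
  consider "card S \<le> 1" | "2 \<le> card S"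
    by linarith
  then show ?thesis
  proof cases
    case 1
    then have "colliders S x = {}" for x
      using assms(2) by (rule colliders_eq_empty_if_card_le_1)
    then show ?thesis
      using 1 assms(2) by (auto simp: potential_def le_Suc_eq card_Suc_eq)
  next
    case 2
    then have "S \<noteq> {}"
      by auto
    then have "(if S = {} then 0 else 1) +
        (\<integral>\<^sup>+ x. ennreal (potential k (card (colliders S x))) \<partial>slot_space k)
        \<le> ennreal 1 + ennreal (potential k (card S) - 1)"
      using nn_integral_potential_colliders_le[OF assms(2) 2 assms(3)] by (simp add: add_left_mono)
    also have "\<dots> = ennreal (potential k (card S))"
      using potential_ge_1[OF assms(1), of "card S"] 2 by (subst ennreal_plus[symmetric]) auto
    finally show ?thesis .
  qed
qed

lemma nn_integral_truncated_completion_time_le: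
  assumes "2 \<le> k" "finite S" "card S \<le> k"
  shows "(\<integral>\<^sup>+ \<omega>. truncated_completion_time N S \<omega> \<partial>chan_space k) \<le> ennreal (potential k (card S))"
  using assms(2,3)
proof (induction N arbitrary: S)
  case 0
  then show ?case by (simp add: truncated_completion_time_def)
next
  case (Suc N)
  interpret chan: prob_space "chan_space k" by (rule prob_space_chan_space)
  interpret slot: prob_space "slot_space k" by (rule prob_space_slot_space)
  define c :: ennreal where "c = (if S = {} then 0 else 1)"
  have colliders: "finite (colliders S x)" "card (colliders S x) \<le> k" for x
    using finite_subset[OF colliders_subset Suc.prems(1)]
      card_colliders_le[OF Suc.prems(1), of x] Suc.prems(2)
    by auto
  have "(\<integral>\<^sup>+ \<omega>. truncated_completion_time (Suc N) S \<omega> \<partial>chan_space k) =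
      (\<integral>\<^sup>+ x. (\<integral>\<^sup>+ \<omega>. c + truncated_completion_time N (colliders S x) \<omega> \<partial>chan_space k)
        \<partial>slot_space k)"
    using borel_measurable_truncated_completion_time[OF Suc.prems(1)]
    by (simp add: nn_integral_chan_space_case_nat truncated_completion_time_case_nat c_def)
  also have "\<dots> = (\<integral>\<^sup>+ x. c +
      (\<integral>\<^sup>+ \<omega>. truncated_completion_time N (colliders S x) \<omega> \<partial>chan_space k) \<partial>slot_space k)"
    using colliders borel_measurable_truncated_completion_time
    by (simp add: nn_integral_add chan.emeasure_space_1[simplified])
  also have "\<dots> \<le> (\<integral>\<^sup>+ x. c + ennreal (potential k (card (colliders S x))) \<partial>slot_space k)"
    using colliders Suc.IH by (intro nn_integral_mono add_left_mono) auto
  also have "\<dots> = c + (\<integral>\<^sup>+ x. ennreal (potential k (card (colliders S x))) \<partial>slot_space k)"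
    using measurable_compose[OF measurable_card_colliders[OF Suc.prems(1)]
        borel_measurable_count_space[of "\<lambda>j. ennreal (potential k j)" UNIV]]
    by (subst nn_integral_add) (auto simp: slot.emeasure_space_1[simplified])
  also have "\<dots> \<le> ennreal (potential k (card S))"
    unfolding c_def using assms(1) Suc.prems by (rule one_slot_potential_bound)
  finally show ?case .
qed

theorem lemma8:
  fixes k n :: nat
  assumes "2 \<le> k" and "2 \<le> n" and "n \<le> k"
  shows "(\<integral>\<^sup>+ \<omega>. completion_time n \<omega> \<partial>chan_space k)
           \<le> ennreal (ln (real n / 2) / (1 - ln (exp 1 - 1)) + inverse (1 - 1 / real k))"
proof -
  have "(\<integral>\<^sup>+ \<omega>. completion_time n \<omega> \<partial>chan_space k) =
      (\<integral>\<^sup>+ \<omega>. (SUP N. truncated_completion_time N {..<n} \<omega>) \<partial>chan_space k)"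
    by (simp add: completion_time_eq_SUP)
  also have "\<dots> = (SUP N. \<integral>\<^sup>+ \<omega>. truncated_completion_time N {..<n} \<omega> \<partial>chan_space k)"
    by (intro nn_integral_monotone_convergence_SUP incseq_truncated_completion_time
        borel_measurable_truncated_completion_time) simp
  also have "\<dots> \<le> ennreal (potential k n)"
    using nn_integral_truncated_completion_time_le[OF assms(1), of "{..<n}"] assms
    by (intro SUP_least) simp
  also have "potential k n = ln (real n / 2) / (1 - ln (exp 1 - 1)) + inverse (1 - 1 / real k)"
    using assms by (simp add: potential_def shrink_rate_def)
  finally show ?thesis .
qed

end
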